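(* For $i,j\in\mathbb{N}$ and $m,n\in\mathbb{N}_0$: (1) if $i\le j$ then $d_i(n)\le d_j(n)$; (2) if $i\le j$ and $d_j(m)=d_i(n)$, then $d_j(m)=d_i(m)$.
   Context: For $i\in\mathbb{N}$ and $n\in\mathbb{N}_0$, $d_i(n)=2^{i-1}-\left|(n\bmod 2^i)-2^{i-1}\right|$. *)

theory Defs
  imports Main
begin

definition d :: "nat \<Rightarrow> nat \<Rightarrow> int" where
  "d i n = 2 ^ (i - 1) - \<bar>int (n mod 2 ^ i) - 2 ^ (i - 1)\<bar>"

end

theory Submission
  imports Defs
begin

text \<open>For \<open>i \<ge> 1\<close>, \<open>d i n\<close> is the distance from \<open>n\<close> to the nearest multiple of \<open>2^i\<close>.
  Since multiples of \<open>2^j\<close> are multiples of \<open>2^i\<close> when \<open>i \<le> j\<close>, this gives \<open>d i n \<le> d j n\<close>.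
  For the second claim, \<open>d j m = d i n \<le> 2^(i-1)\<close>; if the multiple of \<open>2^i\<close> nearest to \<open>m\<close> were not
  the multiple of \<open>2^j\<close> nearest to \<open>m\<close>, the two would lie \<open>2^i\<close> apart, forcing
  \<open>d i m \<ge> 2^i - d j m \<ge> d j m\<close>.\<close>

lemma two_power_eq_double:
  assumes "1 \<le> i"
  shows "(2::int) ^ i = 2 * 2 ^ (i - 1)"
  using assms by (metis Suc_diff_1 less_eq_Suc_le One_nat_def power_Suc)

lemma d_eq_min:
  assumes "1 \<le> i"
  shows "d i n = min (int n mod 2 ^ i) (2 ^ i - int n mod 2 ^ i)"
proof -
  have "d i n = 2 ^ (i - 1) - \<bar>int n mod 2 ^ i - 2 ^ (i - 1)\<bar>"
    unfolding d_def by (simp add: of_nat_mod)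
  with two_power_eq_double[OF assms] show ?thesis
    by linarith
qed

lemma d_le_half: "d i n \<le> 2 ^ (i - 1)"
  unfolding d_def by simp

lemma d_le_dist_multiple:
  assumes "1 \<le> i" and "(2::int) ^ i dvd t"
  shows "d i n \<le> \<bar>int n - t\<bar>"
proof -
  define P :: int where "P = 2 ^ i"
  define r where "r = int n mod P"
  have P: "P > 0" and r: "0 \<le> r" "r < P"
    unfolding P_def r_def by auto
  obtain k where "t = P * k"
    using assms(2) unfolding P_def by blast
  define c where "c = int n div P - k"
  have diff: "int n - t = P * c + r"
    unfolding r_def c_def \<open>t = P * k\<close> by (simp add: algebra_simps)
  have "d i n = min r (P - r)"
    using d_eq_min[OF assms(1)] unfolding P_def r_def by simp
  moreover have "P * c \<ge> 0 \<or> P * c \<le> P * -1"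
  proof (cases "c \<ge> 0")
    case False
    then have "c \<le> -1"
      by simp
    with P show ?thesis
      by (metis mult_left_mono less_imp_le)
  qed (use P in simp)
  ultimately show ?thesis
    using diff r by linarith
qed

lemma d_attained:
  assumes "1 \<le> i"
  shows "\<exists>t. (2::int) ^ i dvd t \<and> d i n = \<bar>int n - t\<bar>"
proof -
  define P :: int where "P = 2 ^ i"
  define r where "r = int n mod P"
  have n: "int n = P * (int n div P) + r"
    unfolding r_def by simp
  have r: "0 \<le> r" "r < P"
    unfolding P_def r_def by auto
  have d: "d i n = min r (P - r)"
    using d_eq_min[OF assms(1)] unfolding P_def r_def by simp
  show ?thesis
  proof (cases "r \<le> P - r")
    case True
    with n r d show ?thesis
      by (intro exI[of _ "P * (int n div P)"]) (auto simp: P_def)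
  next
    case False
    with n r d show ?thesis
      by (intro exI[of _ "P * (int n div P + 1)"]) (auto simp: P_def algebra_simps)
  qed
qed

lemma d_mono:
  assumes "1 \<le> i" and "i \<le> j"
  shows "d i n \<le> d j n"
proof -
  obtain t where t: "(2::int) ^ j dvd t" "d j n = \<bar>int n - t\<bar>"
    using d_attained assms by (meson order_trans)
  have "(2::int) ^ i dvd t"
    using t(1) assms(2) by (meson dvd_trans le_imp_power_dvd)
  with t(2) show ?thesis
    using d_le_dist_multiple[OF assms(1)] by simp
qed

lemma d_eq_if_le_half:
  assumes "1 \<le> i" and "i \<le> j" and half: "d j m \<le> 2 ^ (i - 1)"
  shows "d j m = d i m"
proof -
  obtain t where t: "(2::int) ^ j dvd t" "d j m = \<bar>int m - t\<bar>"
    using d_attained assms(1,2) by (meson order_trans)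
  obtain s where s: "(2::int) ^ i dvd s" "d i m = \<bar>int m - s\<bar>"
    using d_attained[OF assms(1)] by blast
  have "d j m \<le> d i m"
  proof (cases "s = t")
    case True
    with s t show ?thesis by simp
  next
    case False
    have "(2::int) ^ i dvd t"
      using t(1) assms(2) by (meson dvd_trans le_imp_power_dvd)
    with s(1) obtain c where c: "s - t = 2 ^ i * c"
      by (metis dvd_diff dvdE)
    with False have "c \<noteq> 0"
      by auto
    then have "\<bar>c\<bar> \<ge> 1"
      by simp
    then have "\<bar>s - t\<bar> \<ge> 2 ^ i"
      unfolding c abs_mult by simp
    with s(2) t(2) half two_power_eq_double[OF assms(1)] show ?thesis
      by linarith
  qed
  with d_mono[OF assms(1,2), of m] show ?thesis
    by simp
qed

theorem claim10:
  fixes i j m n :: nat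
  assumes "1 \<le> i" and "i \<le> j"
  shows "d i n \<le> d j n \<and> (d j m = d i n \<longrightarrow> d j m = d i m)"
  using d_mono[OF assms] d_eq_if_le_half[OF assms] d_le_half[of i n] by simp

end
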